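(* Let $K\subseteq L\subseteq M$ be finite extensions inside $\bar K$. If $M\cap\tilde L=L$ and $[M:L]=r_K(M)/r_K(L)$, then $M/L$ is Galois.
   Context: $K$ is a perfect field with a fixed algebraic closure $\bar K$. For a finite extension $L/K$, $\tilde L$ denotes its Galois closure in $\bar K$. Writing $L=K(\alpha)$ with $f$ the minimal polynomial of $\alpha$ over $K$, the cluster size $r_K(L)$ is the number of roots of $f$ lying in $L$ (independent of the choice of $\alpha$; it equals $|{\rm Aut}(L/K)|$). *)

theory Defs
  imports "HOL-Computational_Algebra.Polynomial"
begin

text \<open>The ambient type 'a plays the role of the algebraic closure of K.
  Subfields of it are represented as sets.\<close>

definition is_subfield :: "'a::field set \<Rightarrow> bool" where
  "is_subfield S \<longleftrightarrow> 0 \<in> S \<and> 1 \<in> S \<and>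
     (\<forall>x\<in>S. \<forall>y\<in>S. x + y \<in> S \<and> x - y \<in> S \<and> x * y \<in> S) \<and>
     (\<forall>x\<in>S. inverse x \<in> S)"

definition polys_over :: "'a::field set \<Rightarrow> 'a poly set" where
  "polys_over S = {p. \<forall>i. coeff p i \<in> S}"

definition alg_closed_type :: "'a::field itself \<Rightarrow> bool" where
  "alg_closed_type _ \<longleftrightarrow> (\<forall>p::'a poly. degree p > 0 \<longrightarrow> (\<exists>x. poly p x = 0))"

definition algebraic_over :: "'a::field set \<Rightarrow> 'a \<Rightarrow> bool" where
  "algebraic_over K x \<longleftrightarrow> (\<exists>p\<in>polys_over K. p \<noteq> 0 \<and> poly p x = 0)"

definition perfect_field :: "'a::field set \<Rightarrow> bool" where
  "perfect_field K \<longleftrightarrow> is_subfield K \<and>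
     (CHAR('a) = 0 \<or> (\<forall>x\<in>K. \<exists>y\<in>K. y ^ CHAR('a) = x))"

definition minpoly :: "'a::field set \<Rightarrow> 'a \<Rightarrow> 'a poly" where
  "minpoly L x = (SOME p. p \<in> polys_over L \<and> lead_coeff p = 1 \<and> poly p x = 0 \<and>
       (\<forall>q\<in>polys_over L. q \<noteq> 0 \<and> poly q x = 0 \<longrightarrow> degree p \<le> degree q))"

definition span_over :: "'a::field set \<Rightarrow> 'a set \<Rightarrow> 'a set" where
  "span_over L S = {(\<Sum>s\<in>T. c s * s) | T c. finite T \<and> T \<subseteq> S \<and> (\<forall>s\<in>T. c s \<in> L)}"

definition finite_ext :: "'a::field set \<Rightarrow> 'a set \<Rightarrow> bool" where
  "finite_ext L M \<longleftrightarrow> is_subfield L \<and> is_subfield M \<and> L \<subseteq> M \<and>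
     (\<exists>S. finite S \<and> S \<subseteq> M \<and> span_over L S = M)"

definition ext_degree :: "'a::field set \<Rightarrow> 'a set \<Rightarrow> nat" where
  "ext_degree L M = (LEAST n. \<exists>S. finite S \<and> card S = n \<and> S \<subseteq> M \<and> span_over L S = M)"

definition gen_field :: "'a::field set \<Rightarrow> 'a \<Rightarrow> 'a set" where
  "gen_field K \<alpha> = \<Inter>{F. is_subfield F \<and> K \<subseteq> F \<and> \<alpha> \<in> F}"

definition normal_ext :: "'a::field set \<Rightarrow> 'a set \<Rightarrow> bool" where
  "normal_ext L M \<longleftrightarrow> (\<forall>x\<in>M. \<forall>y. poly (minpoly L x) y = 0 \<longrightarrow> y \<in> M)"

definition separable_ext :: "'a::field set \<Rightarrow> 'a set \<Rightarrow> bool" where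
  "separable_ext L M \<longleftrightarrow> (\<forall>x\<in>M. rsquarefree (minpoly L x))"

definition galois_ext :: "'a::field set \<Rightarrow> 'a set \<Rightarrow> bool" where
  "galois_ext L M \<longleftrightarrow> normal_ext L M \<and> separable_ext L M"

definition galois_closure :: "'a::field set \<Rightarrow> 'a set \<Rightarrow> 'a set" where
  "galois_closure K L = \<Inter>{N. is_subfield N \<and> L \<subseteq> N \<and> normal_ext K N}"

definition cluster_size :: "'a::field set \<Rightarrow> 'a set \<Rightarrow> nat" where
  "cluster_size K L = (let \<alpha> = (SOME \<alpha>. \<alpha> \<in> L \<and> L = gen_field K \<alpha>)
     in card {\<beta>\<in>L. poly (minpoly K \<alpha>) \<beta> = 0})"

end

(*
  Write M = K(\<alpha>), L = K(\<beta>) and let H be the set of roots in M of the minimal polynomial h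
  of \<alpha> over L. Every root \<rho> in M of the minimal polynomial of \<alpha> over K gives a K-embedding
  \<sigma>\<^sub>\<rho> : M \<rightarrow> M with \<alpha> \<mapsto> \<rho>. It maps \<beta> to a conjugate of \<beta> lying in M, hence in
  M \<inter> (Galois closure of L) = L; and two such embeddings agreeing on \<beta> differ by an
  L-embedding, so the fibres of \<rho> \<mapsto> \<sigma>\<^sub>\<rho>(\<beta>) have at most |H| elements. Hence
    r_K(M) \<le> r_K(L) |H| \<le> r_K(L) deg h \<le> r_K(L) [M:L] = r_K(M),
  so h has deg h roots in M = L(\<alpha>). The L-embeddings \<alpha> \<mapsto> \<gamma> (\<gamma> \<in> H) then permute H and
  fix exactly L, so the minimal polynomial over L of any x \<in> M divides \<Prod>\<^sub>\<gamma> (X - \<sigma>\<^sub>\<gamma>(x))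
  and splits in M: M/L is normal. Separability is inherited from the perfect field K.
*)

theory Submission
  imports Defs "HOL-Algebra.Multiplicative_Group"
begin

hide_const (open) up_ring.coeff up_ring.monom module.smult Coset.order

section \<open>Subfields and polynomials over them\<close>

lemma pCons_in_polys_over_iff: "pCons c p \<in> polys_over F \<longleftrightarrow> c \<in> F \<and> p \<in> polys_over F"
  unfolding polys_over_def mem_Collect_eq
proof (intro iffI conjI allI)
  assume h: "\<forall>i. coeff (pCons c p) i \<in> F"
  show "c \<in> F" using spec[OF h, of 0] by simp
  show "coeff p i \<in> F" for i using spec[OF h, of "Suc i"] by simp
qed (auto simp: coeff_pCons split: nat.split)

lemma polys_over_coeff: "p \<in> polys_over F \<Longrightarrow> coeff p i \<in> F"
  by (simp add: polys_over_def)

lemma polys_over_mono: "F \<subseteq> G \<Longrightarrow> polys_over F \<subseteq> polys_over G"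
  by (auto simp: polys_over_def)

context
  fixes F :: "'a::field set"
  assumes F: "is_subfield F"
begin

lemma subfield_0: "0 \<in> F" and subfield_1: "1 \<in> F"
  using F by (simp_all add: is_subfield_def)

lemma subfield_add: "x \<in> F \<Longrightarrow> y \<in> F \<Longrightarrow> x + y \<in> F"
  and subfield_diff: "x \<in> F \<Longrightarrow> y \<in> F \<Longrightarrow> x - y \<in> F"
  and subfield_mult: "x \<in> F \<Longrightarrow> y \<in> F \<Longrightarrow> x * y \<in> F"
  and subfield_inverse: "x \<in> F \<Longrightarrow> inverse x \<in> F"
  using F by (simp_all add: is_subfield_def)

lemma subfield_uminus: "x \<in> F \<Longrightarrow> - x \<in> F"
  using subfield_diff[of 0 x] subfield_0 by simp

lemma subfield_divide: "x \<in> F \<Longrightarrow> y \<in> F \<Longrightarrow> x / y \<in> F"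
  by (simp add: divide_inverse subfield_mult subfield_inverse)

lemma subfield_power: "x \<in> F \<Longrightarrow> x ^ n \<in> F"
  by (induction n) (auto simp: subfield_1 subfield_mult)

lemma subfield_sum: "(\<And>i. i \<in> I \<Longrightarrow> f i \<in> F) \<Longrightarrow> sum f I \<in> F"
  by (induction I rule: infinite_finite_induct) (auto simp: subfield_0 subfield_add)

lemma subfield_of_nat: "of_nat n \<in> F"
  by (induction n) (auto simp: subfield_0 subfield_1 subfield_add)

lemma polys_over_0: "0 \<in> polys_over F"
  by (simp add: polys_over_def subfield_0)

lemma polys_over_pCons: "c \<in> F \<Longrightarrow> p \<in> polys_over F \<Longrightarrow> pCons c p \<in> polys_over F"
  by (simp add: pCons_in_polys_over_iff)

lemma polys_over_const: "c \<in> F \<Longrightarrow> [:c:] \<in> polys_over F"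
  by (simp add: polys_over_pCons polys_over_0)

lemma polys_over_1: "1 \<in> polys_over F"
  using polys_over_const[OF subfield_1] by (simp add: one_pCons)

lemma polys_over_add: "p \<in> polys_over F \<Longrightarrow> q \<in> polys_over F \<Longrightarrow> p + q \<in> polys_over F"
  and polys_over_diff: "p \<in> polys_over F \<Longrightarrow> q \<in> polys_over F \<Longrightarrow> p - q \<in> polys_over F"
  by (simp_all add: polys_over_def subfield_add subfield_diff)

lemma polys_over_smult: "c \<in> F \<Longrightarrow> p \<in> polys_over F \<Longrightarrow> smult c p \<in> polys_over F"
  by (simp add: polys_over_def subfield_mult)

lemma polys_over_monom: "c \<in> F \<Longrightarrow> monom c n \<in> polys_over F"
  by (simp add: polys_over_def coeff_monom subfield_0)

lemma polys_over_mult: "p \<in> polys_over F \<Longrightarrow> q \<in> polys_over F \<Longrightarrow> p * q \<in> polys_over F"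
  by (auto simp: polys_over_def coeff_mult intro!: subfield_sum subfield_mult)

lemma polys_over_sum: "(\<And>i. i \<in> I \<Longrightarrow> f i \<in> polys_over F) \<Longrightarrow> sum f I \<in> polys_over F"
  by (induction I rule: infinite_finite_induct) (auto simp: polys_over_0 polys_over_add)

lemma polys_over_prod: "(\<And>i. i \<in> I \<Longrightarrow> f i \<in> polys_over F) \<Longrightarrow> prod f I \<in> polys_over F"
  by (induction I rule: infinite_finite_induct) (auto simp: polys_over_1 polys_over_mult)

lemma polys_over_pderiv: "p \<in> polys_over F \<Longrightarrow> pderiv p \<in> polys_over F"
  using subfield_of_nat
  by (auto simp: polys_over_def coeff_pderiv simp del: of_nat_Suc intro!: subfield_mult)

lemma polys_over_pcompose:
  "p \<in> polys_over F \<Longrightarrow> q \<in> polys_over F \<Longrightarrow> pcompose p q \<in> polys_over F"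
  by (induction p) (auto simp: pcompose_pCons pCons_in_polys_over_iff
      intro!: polys_over_add polys_over_const polys_over_mult)

lemma poly_in_subfield: "p \<in> polys_over F \<Longrightarrow> x \<in> F \<Longrightarrow> poly p x \<in> F"
  by (induction p) (auto simp: pCons_in_polys_over_iff subfield_0 subfield_add subfield_mult)

lemma polys_over_cancel_lead:
  assumes m: "m \<in> polys_over F" "m \<noteq> 0" and q: "q \<in> polys_over F" "q \<noteq> 0"
    and dg: "degree m \<le> degree q"
  obtains t where "t \<in> polys_over F" "q - t * m = 0 \<or> degree (q - t * m) < degree q"
proof -
  define c where "c = lead_coeff q / lead_coeff m"
  define t where "t = monom c (degree q - degree m)"
  have "c \<noteq> 0" using q m by (simp add: c_def)
  then have "degree (t * m) = degree q" "coeff (t * m) (degree q) = lead_coeff q"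
    using m dg by (simp_all add: t_def c_def degree_mult_eq degree_monom_eq coeff_monom_mult)
  then have "coeff (q - t * m) (degree q) = 0" "degree (q - t * m) \<le> degree q"
    by (simp_all add: degree_diff_le)
  then have "q - t * m = 0 \<or> degree (q - t * m) < degree q"
    by (metis le_neq_implies_less leading_coeff_0_iff)
  moreover have "t \<in> polys_over F"
    unfolding t_def c_def using q m by (intro polys_over_monom subfield_divide polys_over_coeff)
  ultimately show ?thesis using that by blast
qed

lemma polys_over_div_mod:
  assumes m: "m \<in> polys_over F" "m \<noteq> 0" and q: "q \<in> polys_over F"
  obtains s r where "s \<in> polys_over F" "r \<in> polys_over F" "q = m * s + r"
    "r = 0 \<or> degree r < degree m"
proof -
  have "\<exists>s r. s \<in> polys_over F \<and> r \<in> polys_over F \<and> q = m * s + r \<and>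
      (r = 0 \<or> degree r < degree m)"
    using q
  proof (induction "degree q" arbitrary: q rule: less_induct)
    case less
    show ?case
    proof (cases "q = 0 \<or> degree q < degree m")
      case True
      then show ?thesis
        using less.prems by (intro exI[of _ 0] exI[of _ q]) (auto simp: polys_over_0)
    next
      case False
      then obtain t where t: "t \<in> polys_over F"
        and "q - t * m = 0 \<or> degree (q - t * m) < degree q"
        using polys_over_cancel_lead[OF m less.prems] by auto
      then consider "q - t * m = 0" | "degree (q - t * m) < degree q" by blast
      then show ?thesis
      proof cases
        case 1
        then have "q = m * t + 0" by (simp add: mult.commute)
        then show ?thesis using t polys_over_0 by blast
      next
        case 2
        moreover have "q - t * m \<in> polys_over F"
          using less.prems m t by (intro polys_over_diff polys_over_mult)
        ultimately obtain s r where sr: "s \<in> polys_over F" "r \<in> polys_over F"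
          "q - t * m = m * s + r" "r = 0 \<or> degree r < degree m"
          using less.hyps by blast
        then have "q = m * (s + t) + r" by (simp add: algebra_simps)
        then show ?thesis using sr t by (blast intro: polys_over_add)
      qed
    qed
  qed
  then show ?thesis using that by blast
qed

end

section \<open>Minimal polynomials\<close>

lemma minpoly_spec:
  assumes F: "is_subfield F" and alg: "algebraic_over F x"
  shows "minpoly F x \<in> polys_over F \<and> lead_coeff (minpoly F x) = 1 \<and> poly (minpoly F x) x = 0 \<and>
    (\<forall>q\<in>polys_over F. q \<noteq> 0 \<and> poly q x = 0 \<longrightarrow> degree (minpoly F x) \<le> degree q)"
proof -
  obtain q1 where "q1 \<in> polys_over F \<and> q1 \<noteq> 0 \<and> poly q1 x = 0"
    using alg by (auto simp: algebraic_over_def)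
  then obtain q0 where q0: "q0 \<in> polys_over F \<and> q0 \<noteq> 0 \<and> poly q0 x = 0"
    and least: "\<forall>q. q \<in> polys_over F \<and> q \<noteq> 0 \<and> poly q x = 0 \<longrightarrow> degree q0 \<le> degree q"
    using ex_has_least_nat[of "\<lambda>q. q \<in> polys_over F \<and> q \<noteq> 0 \<and> poly q x = 0" q1 degree] by blast
  let ?p = "smult (inverse (lead_coeff q0)) q0"
  have "?p \<in> polys_over F \<and> lead_coeff ?p = 1 \<and> poly ?p x = 0 \<and>
      (\<forall>q\<in>polys_over F. q \<noteq> 0 \<and> poly q x = 0 \<longrightarrow> degree ?p \<le> degree q)"
    using q0 least F
    by (auto simp: lead_coeff_smult intro!: polys_over_smult subfield_inverse polys_over_coeff)
  then show ?thesis unfolding minpoly_def by (rule someI)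
qed

lemma algebraic_over_mono: "algebraic_over K x \<Longrightarrow> K \<subseteq> F \<Longrightarrow> algebraic_over F x"
  unfolding algebraic_over_def using polys_over_mono by blast

context
  fixes F :: "'a::field set" and x :: 'a
  assumes F: "is_subfield F" and alg: "algebraic_over F x"
begin

lemma minpoly_in_polys_over: "minpoly F x \<in> polys_over F"
  and minpoly_monic: "lead_coeff (minpoly F x) = 1"
  and minpoly_root: "poly (minpoly F x) x = 0"
  and minpoly_degree_le: "q \<in> polys_over F \<Longrightarrow> q \<noteq> 0 \<Longrightarrow> poly q x = 0 \<Longrightarrow> degree (minpoly F x) \<le> degree q"
  using minpoly_spec[OF F alg] by blast+

lemma minpoly_nonzero: "minpoly F x \<noteq> 0"
  using minpoly_monic by auto

lemma minpoly_degree_pos: "degree (minpoly F x) > 0"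
proof (rule ccontr)
  assume "\<not> ?thesis"
  then have "minpoly F x = 1" using minpoly_monic
    by (metis degree_eq_zeroE gr0I lead_coeff_pCons(2) one_pCons pCons_0_0)
  then show False using minpoly_root by simp
qed

lemma remainder_minpoly_eq_0:
  assumes "r \<in> polys_over F" "poly r x = 0" "r = 0 \<or> degree r < degree (minpoly F x)"
  shows "r = 0"
  using assms minpoly_degree_le by fastforce

lemma minpoly_dvd:
  assumes q: "q \<in> polys_over F" "poly q x = 0"
  shows "minpoly F x dvd q"
proof -
  obtain s r where sr: "s \<in> polys_over F" "r \<in> polys_over F" "q = minpoly F x * s + r"
    "r = 0 \<or> degree r < degree (minpoly F x)"
    using polys_over_div_mod[OF F minpoly_in_polys_over minpoly_nonzero q(1)] .
  have "poly r x = 0" using sr(3) q(2) minpoly_root by simp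
  then have "r = 0" using sr(2,4) remainder_minpoly_eq_0 by blast
  then show ?thesis using sr(3) by simp
qed

lemma minpoly_unique:
  assumes q: "q \<in> polys_over F" "lead_coeff q = 1" "poly q x = 0"
    and deg: "degree q \<le> degree (minpoly F x)"
  shows "q = minpoly F x"
proof -
  obtain s where s: "q = minpoly F x * s" using minpoly_dvd[OF q(1,3)] by (auto elim: dvdE)
  then have "s \<noteq> 0" using q(2) by auto
  then have "degree s = 0" using degree_mult_eq[OF minpoly_nonzero] s deg by simp
  moreover have "lead_coeff s = 1" using s q(2) minpoly_monic by (simp add: lead_coeff_mult)
  ultimately show ?thesis using s by (auto elim: degree_eq_zeroE)
qed

end

lemma minpoly_conjugate:
  assumes F: "is_subfield F" and alg: "algebraic_over F x" and y: "poly (minpoly F x) y = 0"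
  shows "minpoly F y = minpoly F x"
proof -
  note X = minpoly_in_polys_over[OF F alg] minpoly_nonzero[OF F alg] minpoly_root[OF F alg]
  have algy: "algebraic_over F y"
    unfolding algebraic_over_def using X(1,2) y by blast
  note Y = minpoly_in_polys_over[OF F algy] minpoly_nonzero[OF F algy] minpoly_monic[OF F algy]
    minpoly_root[OF F algy] minpoly_degree_pos[OF F algy]
  obtain s r where sr: "s \<in> polys_over F" "r \<in> polys_over F" "minpoly F x = minpoly F y * s + r"
    "r = 0 \<or> degree r < degree (minpoly F y)"
    using polys_over_div_mod[OF F Y(1,2) X(1)] .
  have "poly r y = 0" using sr(3) y Y(4) by simp
  then have r: "r = 0" using remainder_minpoly_eq_0[OF F algy sr(2) _ sr(4)] by simp
  then have "s \<noteq> 0" using sr(3) X(2) by auto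
  then have deg: "degree (minpoly F x) = degree (minpoly F y) + degree s"
    using sr(3) r degree_mult_eq[OF Y(2)] by simp
  have "poly (minpoly F y) x = 0 \<or> poly s x = 0" using X(3) sr(3) r by simp
  moreover have "poly s x \<noteq> 0"
    using minpoly_degree_le[OF F alg sr(1) \<open>s \<noteq> 0\<close>] deg Y(5) by auto
  ultimately show ?thesis
    using minpoly_unique[OF F alg Y(1,3)] deg by simp
qed

definition roots_in :: "'a::field set \<Rightarrow> 'a poly \<Rightarrow> 'a set" where
  "roots_in S p = {x \<in> S. poly p x = 0}"

lemma finite_roots_in: "p \<noteq> 0 \<Longrightarrow> finite (roots_in S p)"
  unfolding roots_in_def using poly_roots_finite by (rule rev_finite_subset) auto

lemma card_roots_in_le: "p \<noteq> 0 \<Longrightarrow> card (roots_in S p) \<le> degree p"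
  using card_mono[OF poly_roots_finite, of p "roots_in S p"] card_poly_roots_bound[of p]
  by (force simp: roots_in_def)

section \<open>Simple extensions\<close>

definition adjoin :: "'a::field set \<Rightarrow> 'a \<Rightarrow> 'a set" where
  "adjoin F a = {poly u a | u. u \<in> polys_over F}"

lemma adjoinI: "u \<in> polys_over F \<Longrightarrow> poly u a \<in> adjoin F a"
  by (auto simp: adjoin_def)

lemma adjoinE: "z \<in> adjoin F a \<Longrightarrow> (\<And>u. u \<in> polys_over F \<Longrightarrow> z = poly u a \<Longrightarrow> P) \<Longrightarrow> P"
  by (auto simp: adjoin_def)

context
  fixes F :: "'a::field set"
  assumes F: "is_subfield F"
begin

lemma subset_adjoin: "F \<subseteq> adjoin F a"
  using adjoinI[OF polys_over_const[OF F], of _ a] by auto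

lemma adjoin_gen: "a \<in> adjoin F a"
  using adjoinI[OF polys_over_pCons[OF F subfield_0[OF F] polys_over_1[OF F]], of a] by simp

lemma poly_in_adjoin:
  assumes p: "p \<in> polys_over F" and z: "z \<in> adjoin F a"
  shows "poly p z \<in> adjoin F a"
proof -
  obtain u where u: "u \<in> polys_over F" "z = poly u a" using z by (rule adjoinE)
  then show ?thesis using adjoinI[OF polys_over_pcompose[OF F p u(1)], of a]
    by (simp add: poly_pcompose)
qed

lemma adjoin_add: "x \<in> adjoin F a \<Longrightarrow> y \<in> adjoin F a \<Longrightarrow> x + y \<in> adjoin F a"
  and adjoin_diff: "x \<in> adjoin F a \<Longrightarrow> y \<in> adjoin F a \<Longrightarrow> x - y \<in> adjoin F a"
  and adjoin_mult: "x \<in> adjoin F a \<Longrightarrow> y \<in> adjoin F a \<Longrightarrow> x * y \<in> adjoin F a"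
  by (auto elim!: adjoinE intro!: adjoinI[of "_ + _", simplified] adjoinI[of "_ - _", simplified]
      adjoinI[of "_ * _", simplified] polys_over_add polys_over_diff polys_over_mult F)

lemma adjoin_least: "is_subfield G \<Longrightarrow> F \<subseteq> G \<Longrightarrow> a \<in> G \<Longrightarrow> adjoin F a \<subseteq> G"
  by (auto elim!: adjoinE intro!: poly_in_subfield dest: polys_over_mono)

lemma adjoin_inverse:
  assumes alg: "algebraic_over F z" and z: "z \<in> adjoin F a"
  shows "inverse z \<in> adjoin F a"
proof (cases "z = 0")
  case True
  then show ?thesis using subset_adjoin subfield_0[OF F] by auto
next
  case False
  obtain c m where m: "minpoly F z = pCons c m" by (cases "minpoly F z")
  have c: "c \<in> F" and mF: "m \<in> polys_over F"
    using minpoly_in_polys_over[OF F alg] by (simp_all add: m pCons_in_polys_over_iff)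
  have eq: "c + z * poly m z = 0" using minpoly_root[OF F alg] by (simp add: m)
  have "c \<noteq> 0"
  proof
    assume "c = 0"
    then have "m \<noteq> 0" "poly m z = 0" using minpoly_nonzero[OF F alg] eq False by (auto simp: m)
    then show False using minpoly_degree_le[OF F alg mF] \<open>c = 0\<close> by (simp add: m)
  qed
  have "z * poly m z = - c" using eq by (simp add: eq_neg_iff_add_eq_0 add.commute)
  then have "z * poly (smult (- inverse c) m) z = 1"
    using \<open>c \<noteq> 0\<close> by (simp add: mult.left_commute[of z])
  then have "inverse z = poly (smult (- inverse c) m) z" by (rule inverse_unique)
  also have "\<dots> \<in> adjoin F a"
    using c mF z by (intro poly_in_adjoin polys_over_smult subfield_uminus subfield_inverse F)
  finally show ?thesis .
qed

lemma is_subfield_adjoin: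
  assumes "\<And>z. algebraic_over F z"
  shows "is_subfield (adjoin F a)"
  unfolding is_subfield_def using subset_adjoin subfield_0[OF F] subfield_1[OF F]
  by (auto intro: adjoin_add adjoin_diff adjoin_mult adjoin_inverse assms)

lemma gen_field_eq_adjoin:
  assumes "\<And>z. algebraic_over F z"
  shows "gen_field F a = adjoin F a"
proof
  show "gen_field F a \<subseteq> adjoin F a" unfolding gen_field_def
    using is_subfield_adjoin[OF assms] subset_adjoin adjoin_gen by blast
  show "adjoin F a \<subseteq> gen_field F a" unfolding gen_field_def using adjoin_least by blast
qed

end

lemma adjoin_intermediate_eq:
  assumes F: "is_subfield F" and L: "is_subfield L" "F \<subseteq> L" "L \<subseteq> adjoin F a"
    and M: "is_subfield (adjoin F a)"
  shows "adjoin L a = adjoin F a"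
proof
  show "adjoin L a \<subseteq> adjoin F a" using adjoin_least[OF L(1) M L(3) adjoin_gen[OF F]] .
  show "adjoin F a \<subseteq> adjoin L a" using polys_over_mono[OF L(2)] by (auto simp: adjoin_def)
qed

section \<open>Spanning sets and degrees\<close>

lemma span_over_subset: "is_subfield G \<Longrightarrow> K \<subseteq> G \<Longrightarrow> S \<subseteq> G \<Longrightarrow> span_over K S \<subseteq> G"
  unfolding span_over_def by (auto intro!: subfield_sum subfield_mult)

lemma span_over_mono: "K \<subseteq> L \<Longrightarrow> span_over K S \<subseteq> span_over L S"
  unfolding span_over_def by blast

lemma span_over_coeffs:
  assumes "finite S" "x \<in> span_over F S" "0 \<in> F"
  obtains c where "\<And>s. s \<in> S \<Longrightarrow> c s \<in> F" "x = (\<Sum>s\<in>S. c s * s)"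
proof -
  obtain T c where T: "x = (\<Sum>s\<in>T. c s * s)" "finite T" "T \<subseteq> S" "\<forall>s\<in>T. c s \<in> F"
    using assms(2) unfolding span_over_def by blast
  define c' where "c' s = (if s \<in> T then c s else 0)" for s
  have "(\<Sum>s\<in>S. c' s * s) = (\<Sum>s\<in>T. c' s * s)"
    by (rule sum.mono_neutral_right[OF assms(1) T(3)]) (simp add: c'_def)
  also have "\<dots> = x" unfolding T(1) by (rule sum.cong) (simp_all add: c'_def)
  finally show ?thesis using that[of c'] T(4) assms(3) by (auto simp: c'_def)
qed

lemma finite_ext_finite:
  assumes fe: "finite_ext K M" and fin: "finite K"
  shows "finite M"
proof -
  obtain S where S: "finite S" "span_over K S = M" using fe by (auto simp: finite_ext_def)
  have "0 \<in> K" using fe subfield_0 by (auto simp: finite_ext_def)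
  have "M \<subseteq> (\<lambda>c. \<Sum>s\<in>S. c s * s) ` (S \<rightarrow>\<^sub>E K)"
  proof
    fix x assume "x \<in> M"
    then obtain c where c: "\<And>s. s \<in> S \<Longrightarrow> c s \<in> K" "x = (\<Sum>s\<in>S. c s * s)"
      using span_over_coeffs[OF S(1) _ \<open>0 \<in> K\<close>] S(2) by blast
    then have "x = (\<Sum>s\<in>S. restrict c S s * s)" by simp
    moreover have "restrict c S \<in> S \<rightarrow>\<^sub>E K" using c(1) by simp
    ultimately show "x \<in> (\<lambda>c. \<Sum>s\<in>S. c s * s) ` (S \<rightarrow>\<^sub>E K)" by blast
  qed
  moreover have "finite (S \<rightarrow>\<^sub>E K)" using S(1) fin by (intro finite_PiE) auto
  ultimately show ?thesis by (rule finite_subset[OF _ finite_imageI])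
qed

lemma finite_ext_tower:
  assumes fe: "finite_ext K M" and L: "is_subfield L" "K \<subseteq> L" "L \<subseteq> M"
  shows "finite_ext L M"
proof -
  obtain S where S: "finite S" "S \<subseteq> M" "span_over K S = M" using fe by (auto simp: finite_ext_def)
  have M: "is_subfield M" using fe by (simp add: finite_ext_def)
  have "span_over L S = M"
    using span_over_mono[OF L(2), of S] span_over_subset[OF M L(3) S(2)] S(3) by blast
  then show ?thesis using L M S(1,2) by (auto simp: finite_ext_def)
qed

lemma underdetermined_system_solvable:
  fixes v :: "'i \<Rightarrow> 'j \<Rightarrow> 'a::field"
  assumes F: "is_subfield F"
  shows "finite J \<Longrightarrow> finite I \<Longrightarrow> card J < card I \<Longrightarrow> (\<And>i j. i \<in> I \<Longrightarrow> j \<in> J \<Longrightarrow> v i j \<in> F) \<Longrightarrow>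
    \<exists>\<mu>. (\<forall>i\<in>I. \<mu> i \<in> F) \<and> (\<exists>i\<in>I. \<mu> i \<noteq> 0) \<and> (\<forall>j\<in>J. (\<Sum>i\<in>I. \<mu> i * v i j) = 0)"
proof (induction J arbitrary: I v rule: finite_induct)
  case empty
  then obtain i where "i \<in> I" by fastforce
  then show ?case using subfield_1[OF F] by (intro exI[of _ "\<lambda>_. 1"]) auto
next
  case (insert j J)
  show ?case
  proof (cases "\<forall>i\<in>I. v i j = 0")
    case True
    then show ?thesis using insert.IH[of I v] insert.prems insert.hyps by auto
  next
    case False
    \<comment> \<open>eliminate the unknown \<open>i0\<close> using equation \<open>j\<close>\<close>
    then obtain i0 where i0: "i0 \<in> I" "v i0 j \<noteq> 0" by blast
    define w where "w i k = v i k - (v i j / v i0 j) * v i0 k" for i k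
    have "\<exists>\<nu>. (\<forall>i\<in>I - {i0}. \<nu> i \<in> F) \<and> (\<exists>i\<in>I - {i0}. \<nu> i \<noteq> 0) \<and>
        (\<forall>k\<in>J. (\<Sum>i\<in>I - {i0}. \<nu> i * w i k) = 0)"
      using insert i0 unfolding w_def
      by (intro insert.IH)
        (auto intro!: subfield_diff[OF F] subfield_mult[OF F] subfield_divide[OF F])
    then obtain \<nu> where \<nu>: "\<forall>i\<in>I - {i0}. \<nu> i \<in> F" "\<exists>i\<in>I - {i0}. \<nu> i \<noteq> 0"
      "\<forall>k\<in>J. (\<Sum>i\<in>I - {i0}. \<nu> i * w i k) = 0" by blast
    define c where "c = (\<Sum>i\<in>I - {i0}. \<nu> i * v i j) / v i0 j"
    define \<mu> where "\<mu> i = (if i = i0 then - c else \<nu> i)" for i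
    have "c \<in> F" unfolding c_def using \<nu>(1) insert.prems(3) i0 insert.hyps
      by (intro subfield_divide[OF F] subfield_sum[OF F] subfield_mult[OF F]) auto
    then have "\<forall>i\<in>I. \<mu> i \<in> F" using \<nu>(1) subfield_uminus[OF F] by (auto simp: \<mu>_def)
    moreover have "\<exists>i\<in>I. \<mu> i \<noteq> 0" using \<nu>(2) by (auto simp: \<mu>_def)
    moreover have sum_eq: "(\<Sum>i\<in>I. \<mu> i * v i k) = (\<Sum>i\<in>I - {i0}. \<nu> i * w i k)" for k
    proof -
      have "(\<Sum>i\<in>I. \<mu> i * v i k) = (\<Sum>i\<in>I - {i0}. \<nu> i * v i k) - c * v i0 k"
        using sum.remove[OF insert.prems(1) i0(1), of "\<lambda>i. \<mu> i * v i k"] by (simp add: \<mu>_def)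
      also have "\<dots> = (\<Sum>i\<in>I - {i0}. \<nu> i * w i k)"
        by (simp add: w_def c_def algebra_simps sum_subtractf sum_distrib_left sum_distrib_right
            sum_divide_distrib)
      finally show ?thesis .
    qed
    moreover have "(\<Sum>i\<in>I. \<mu> i * v i j) = 0" using sum_eq i0 by (simp add: w_def)
    ultimately show ?thesis using \<nu>(3) sum_eq by auto
  qed
qed

lemma minpoly_powers_independent:
  assumes L: "is_subfield L" and alg: "algebraic_over L \<alpha>"
    and \<mu>: "\<And>i. i < degree (minpoly L \<alpha>) \<Longrightarrow> \<mu> i \<in> L"
    and sum: "(\<Sum>i<degree (minpoly L \<alpha>). \<mu> i * \<alpha> ^ i) = 0"
    and i: "i < degree (minpoly L \<alpha>)"
  shows "\<mu> i = 0"
proof (rule ccontr)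
  let ?d = "degree (minpoly L \<alpha>)"
  assume "\<mu> i \<noteq> 0"
  define p where "p = (\<Sum>i<?d. monom (\<mu> i) i)"
  have coeff_p: "coeff p j = (if j < ?d then \<mu> j else 0)" for j
    by (simp add: p_def coeff_sum coeff_monom)
  have "p \<in> polys_over L" unfolding p_def using \<mu> by (intro polys_over_sum polys_over_monom L) auto
  moreover have "coeff p i \<noteq> 0" using \<open>\<mu> i \<noteq> 0\<close> i coeff_p by simp
  then have "p \<noteq> 0" by auto
  moreover have "poly p \<alpha> = 0" using sum by (simp add: p_def poly_sum poly_monom)
  ultimately have "?d \<le> degree p" by (intro minpoly_degree_le[OF L alg])
  moreover have "degree p \<le> ?d - 1" by (rule degree_le) (auto simp: coeff_p)
  ultimately show False using i by linarith
qed

lemma degree_minpoly_le_card_span: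
  assumes L: "is_subfield L" and alg: "algebraic_over L \<alpha>" and M: "is_subfield M"
    and \<alpha>: "\<alpha> \<in> M" and S: "finite S" "span_over L S = M"
  shows "degree (minpoly L \<alpha>) \<le> card S"
proof (rule ccontr)
  let ?d = "degree (minpoly L \<alpha>)"
  assume "\<not> ?thesis"
  then have lt: "card S < card {..<?d}" by simp
  \<comment> \<open>then \<open>1, \<alpha>, \<dots>, \<alpha>^(d - 1)\<close> are linearly dependent over \<open>L\<close>\<close>
  have "\<exists>c. (\<forall>s\<in>S. c s \<in> L) \<and> \<alpha> ^ i = (\<Sum>s\<in>S. c s * s)" for i
  proof -
    have "\<alpha> ^ i \<in> span_over L S" using S(2) subfield_power[OF M \<alpha>] by simp
    then obtain c where "\<And>s. s \<in> S \<Longrightarrow> c s \<in> L" "\<alpha> ^ i = (\<Sum>s\<in>S. c s * s)"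
      using span_over_coeffs[OF S(1) _ subfield_0[OF L]] by blast
    then show ?thesis by blast
  qed
  then obtain c where c: "\<And>i s. s \<in> S \<Longrightarrow> c i s \<in> L" "\<And>i. \<alpha> ^ i = (\<Sum>s\<in>S. c i s * s)"
    by metis
  obtain \<mu> where \<mu>: "\<forall>i\<in>{..<?d}. \<mu> i \<in> L" "\<exists>i\<in>{..<?d}. \<mu> i \<noteq> 0"
      "\<forall>s\<in>S. (\<Sum>i<?d. \<mu> i * c i s) = 0"
    using underdetermined_system_solvable[OF L S(1) _ lt, of c] c(1) by blast
  have "(\<Sum>i<?d. \<mu> i * \<alpha> ^ i) = (\<Sum>i<?d. \<Sum>s\<in>S. \<mu> i * c i s * s)"
    by (simp add: c(2) sum_distrib_left mult.assoc)
  also have "\<dots> = (\<Sum>s\<in>S. (\<Sum>i<?d. \<mu> i * c i s) * s)"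
    by (subst sum.swap) (simp add: sum_distrib_right)
  also have "\<dots> = 0" using \<mu>(3) by simp
  finally have "(\<Sum>i<?d. \<mu> i * \<alpha> ^ i) = 0" .
  then have "\<mu> i = 0" if "i < ?d" for i
    using minpoly_powers_independent[OF L alg _ _ that] \<mu>(1) by blast
  then show False using \<mu>(2) by auto
qed

lemma degree_minpoly_le_ext_degree:
  assumes fe: "finite_ext L M" and alg: "algebraic_over L \<alpha>" and \<alpha>: "\<alpha> \<in> M"
  shows "degree (minpoly L \<alpha>) \<le> ext_degree L M"
proof -
  have "\<exists>n S. finite S \<and> card S = n \<and> S \<subseteq> M \<and> span_over L S = M"
    using fe by (auto simp: finite_ext_def)
  then have "\<exists>S. finite S \<and> card S = ext_degree L M \<and> S \<subseteq> M \<and> span_over L S = M"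
    unfolding ext_degree_def by (rule LeastI_ex)
  then obtain S where S: "finite S" "card S = ext_degree L M" "span_over L S = M" by blast
  have L: "is_subfield L" and M: "is_subfield M" using fe by (simp_all add: finite_ext_def)
  show ?thesis using degree_minpoly_le_card_span[OF L alg M \<alpha> S(1,3)] S(2) by simp
qed

section \<open>Separability over perfect fields\<close>

lemma rsquarefreeI:
  fixes p :: "'a::field poly"
  assumes nz: "p \<noteq> 0" and simple: "\<And>x. poly p x = 0 \<Longrightarrow> poly (pderiv p) x \<noteq> 0"
  shows "rsquarefree p"
  unfolding rsquarefree_def
proof (intro conjI allI nz)
  fix x
  show "order x p = 0 \<or> order x p = 1"
  proof (rule ccontr)
    let ?l = "[:-x, 1:]"
    assume "\<not> ?thesis"
    then have "?l ^ 2 dvd p" using order_divides by force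
    then obtain q where "p = ?l * (?l * q)"
      by (auto simp only: power2_eq_square mult.assoc elim: dvdE)
    then have "pderiv p = ?l * pderiv (?l * q) + ?l * q * pderiv ?l" by (simp only: pderiv_mult)
    then have "poly p x = 0 \<and> poly (pderiv p) x = 0" using \<open>p = _\<close> by simp
    then show False using simple by blast
  qed
qed

lemma rsquarefree_dvd:
  assumes p: "rsquarefree p" and q: "q dvd p"
  shows "rsquarefree q"
  unfolding rsquarefree_def
proof (intro conjI allI)
  have "p \<noteq> 0" using p by (simp add: rsquarefree_def)
  then show "q \<noteq> 0" using q by auto
  fix x
  have "order x q \<le> order x p" using q \<open>p \<noteq> 0\<close> by (rule dvd_imp_order_le[rotated])
  moreover have "order x p \<le> 1" using p unfolding rsquarefree_def by (metis le_refl zero_le)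
  ultimately show "order x q = 0 \<or> order x q = 1" by linarith
qed

lemma pderiv_eq_0_imp_char_dvd:
  fixes p :: "'a::field poly"
  assumes "pderiv p = 0" "coeff p k \<noteq> 0"
  shows "CHAR('a) dvd k"
proof (cases k)
  case (Suc n)
  then have "(of_nat k :: 'a) * coeff p k = 0" using arg_cong[OF assms(1), of "\<lambda>q. coeff q n"]
    by (simp add: coeff_pderiv del: of_nat_Suc)
  then show ?thesis using assms(2) by (simp add: of_nat_eq_0_iff_char_dvd)
qed simp

lemma poly_pderiv_eq_0:
  fixes p :: "'a::field poly"
  assumes dp: "pderiv p = 0" and char: "CHAR('a) > 0"
  shows "poly p x = (\<Sum>i\<le>degree p div CHAR('a). coeff p (CHAR('a) * i) * x ^ (CHAR('a) * i))"
proof -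
  let ?q = "CHAR('a)"
  define E where "E = degree p div ?q"
  have "?q dvd degree p"
    using pderiv_eq_0_imp_char_dvd[OF dp, of "degree p"] by (cases "p = 0") auto
  then have degp: "degree p = ?q * E" by (simp add: E_def)
  have "poly p x = (\<Sum>k\<le>degree p. coeff p k * x ^ k)" by (simp add: poly_altdef)
  also have "\<dots> = (\<Sum>k\<in>(\<lambda>i. ?q * i) ` {..E}. coeff p k * x ^ k)"
  proof (rule sum.mono_neutral_right)
    show "\<forall>k\<in>{..degree p} - (\<lambda>i. ?q * i) ` {..E}. coeff p k * x ^ k = 0"
      using pderiv_eq_0_imp_char_dvd[OF dp] degp char by (fastforce elim!: dvdE)
  qed (auto simp: degp)
  also have "\<dots> = (\<Sum>i\<le>E. coeff p (?q * i) * x ^ (?q * i))"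
    using char by (subst sum.reindex) (auto simp: inj_on_def)
  finally show ?thesis by (simp add: E_def)
qed

text \<open>Over a perfect field of characteristic \<open>q > 0\<close>, a polynomial with vanishing derivative
  only involves powers \<open>X^(q i)\<close>, so taking \<open>q\<close>-th roots of its coefficients gives a \<open>q\<close>-th
  root of it.\<close>
lemma perfect_field_root_of_poly:
  fixes p :: "'a::field poly"
  assumes pf: "perfect_field K" and char: "CHAR('a) > 0"
    and p: "p \<in> polys_over K" and dp: "pderiv p = 0"
  obtains h where "h \<in> polys_over K" "degree p = CHAR('a) * degree h"
    "\<And>x. poly h x ^ CHAR('a) = poly p x"
proof -
  let ?q = "CHAR('a)"
  have K: "is_subfield K" using pf by (simp add: perfect_field_def)
  have "\<forall>c\<in>K. \<exists>d\<in>K. d ^ ?q = c" using pf char by (simp add: perfect_field_def)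
  then have "\<forall>i. \<exists>d. d \<in> K \<and> d ^ ?q = coeff p (?q * i)" using polys_over_coeff[OF p] by blast
  then obtain c where c: "\<And>i. c i \<in> K" "\<And>i. c i ^ ?q = coeff p (?q * i)" by metis
  define E where "E = degree p div ?q"
  define h where "h = (\<Sum>i\<le>E. monom (c i) i)"
  have coeff_h: "coeff h j = (if j \<le> E then c j else 0)" for j
    by (simp add: h_def coeff_sum coeff_monom)
  have "?q dvd degree p"
    using pderiv_eq_0_imp_char_dvd[OF dp, of "degree p"] by (cases "p = 0") auto
  then have degp: "degree p = ?q * E" by (simp add: E_def)
  have "degree h = E"
  proof (rule antisym)
    show "degree h \<le> E" by (rule degree_le) (simp add: coeff_h)
    show "E \<le> degree h"
    proof (cases "E = 0")
      case False
      then have "p \<noteq> 0" using degp char by auto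
      then have "c E ^ ?q \<noteq> 0" using c(2)[of E] degp by (metis leading_coeff_0_iff)
      then have "coeff h E \<noteq> 0" using coeff_h[of E] char by simp
      then show ?thesis by (rule le_degree)
    qed simp
  qed
  moreover have "h \<in> polys_over K" unfolding h_def using c(1)
    by (intro polys_over_sum polys_over_monom K)
  moreover have "poly h x ^ ?q = poly p x" for x
  proof -
    have "poly h x ^ ?q = (\<Sum>i\<le>E. (c i * x ^ i) ^ ?q)"
      by (simp add: h_def poly_sum poly_monom freshmans_dream_sum prime_CHAR_semidom char)
    also have "\<dots> = (\<Sum>i\<le>E. coeff p (?q * i) * x ^ (?q * i))"
      by (simp add: power_mult_distrib c flip: power_mult mult.commute)
    also have "\<dots> = poly p x" using poly_pderiv_eq_0[OF dp char] by (simp add: E_def)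
    finally show ?thesis .
  qed
  ultimately show ?thesis using that degp by simp
qed

lemma minpoly_rsquarefree:
  assumes pf: "perfect_field K" and alg: "algebraic_over K x"
  shows "rsquarefree (minpoly K x)"
proof (rule rsquarefreeI)
  let ?f = "minpoly K x"
  have K: "is_subfield K" using pf by (simp add: perfect_field_def)
  note f = minpoly_in_polys_over[OF K alg] minpoly_nonzero[OF K alg] minpoly_degree_pos[OF K alg]
  show "?f \<noteq> 0" by (rule f(2))
  fix y assume y: "poly ?f y = 0"
  show "poly (pderiv ?f) y \<noteq> 0"
  proof
    assume y': "poly (pderiv ?f) y = 0"
    have algy: "algebraic_over K y"
      unfolding algebraic_over_def using f(1,2) y by blast
    \<comment> \<open>\<open>?f\<close> is also the minimal polynomial of \<open>y\<close>, so its derivative, of smaller degree,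
      vanishes\<close>
    have "degree (pderiv ?f) \<le> degree ?f - 1"
      by (rule degree_le) (auto simp: coeff_pderiv coeff_eq_0)
    then have "degree (pderiv ?f) < degree (minpoly K y)"
      using minpoly_conjugate[OF K alg y] f(3) by simp
    then have dp: "pderiv ?f = 0"
      using remainder_minpoly_eq_0[OF K algy polys_over_pderiv[OF K f(1)] y'] by blast
    show False
    proof (cases "CHAR('a) = 0")
      case True
      then show False
        using pderiv_eq_0_imp_char_dvd[OF dp, of "degree ?f"] f(2,3) by simp
    next
      case False
      then obtain h where h: "h \<in> polys_over K" "degree ?f = CHAR('a) * degree h"
          "\<And>z. poly h z ^ CHAR('a) = poly ?f z"
        using perfect_field_root_of_poly[OF pf _ f(1) dp] by blast
      have "CHAR('a) \<ge> 2" using False prime_CHAR_semidom[where 'a = 'a] prime_ge_2_nat by blast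
      have "poly h x = 0" using h(3)[of x] minpoly_root[OF K alg] by simp
      moreover have "h \<noteq> 0" "degree h < degree ?f"
        using h(2) f(3) \<open>CHAR('a) \<ge> 2\<close> by auto
      ultimately show False using minpoly_degree_le[OF K alg h(1)] by fastforce
    qed
  qed
qed

lemma separable_ext_over_perfect:
  assumes pf: "perfect_field K" and alg: "\<And>z. algebraic_over K z"
    and L: "is_subfield L" "K \<subseteq> L"
  shows "separable_ext L M"
  unfolding separable_ext_def
proof
  fix x
  have K: "is_subfield K" using pf by (simp add: perfect_field_def)
  have "minpoly K x \<in> polys_over L"
    using minpoly_in_polys_over[OF K alg] polys_over_mono[OF L(2)] by blast
  then have "minpoly L x dvd minpoly K x"
    using minpoly_dvd[OF L(1) algebraic_over_mono[OF alg L(2)]] minpoly_root[OF K alg] by blast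
  then show "rsquarefree (minpoly L x)"
    using rsquarefree_dvd minpoly_rsquarefree[OF pf alg] by blast
qed

section \<open>Primitive elements\<close>

lemma rsquarefree_single_root:
  fixes m :: "'a::field poly"
  assumes ac: "alg_closed_type TYPE('a)" and monic: "lead_coeff m = 1" and rsf: "rsquarefree m"
    and b: "poly m b = 0" and only: "\<And>y. poly m y = 0 \<Longrightarrow> y = b"
  shows "m = [:-b, 1:]"
proof -
  have "[:-b, 1:] dvd m" using b by (simp add: poly_eq_0_iff_dvd)
  then obtain q where q: "m = [:-b, 1:] * q" by (rule dvdE)
  have "degree q = 0"
  proof (rule ccontr)
    assume "degree q \<noteq> 0"
    then obtain y where y: "poly q y = 0" using ac unfolding alg_closed_type_def by blast
    then have "poly m y = 0" by (simp add: q)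
    then have "y = b" by (rule only)
    then have "[:-b, 1:] dvd q" using y by (simp add: poly_eq_0_iff_dvd)
    then have "[:-b, 1:] ^ 2 dvd m" unfolding q power2_eq_square
      by (rule mult_dvd_mono[OF dvd_refl])
    moreover have "m \<noteq> 0" "order b m \<le> 1"
      using rsf unfolding rsquarefree_def by (metis le_refl zero_le)+
    ultimately show False using order_divides[of b 2 m] by simp
  qed
  then obtain c where "q = [:c:]" by (metis degree_eq_zeroE)
  moreover have "lead_coeff q = 1" using monic unfolding q lead_coeff_mult by simp
  ultimately show ?thesis using q by simp
qed

lemma in_subfield_if_unique_root:
  fixes b :: "'a::field"
  assumes ac: "alg_closed_type TYPE('a)" and E: "is_subfield E" and alg: "algebraic_over E b"
    and rsf: "rsquarefree (minpoly E b)" and only: "\<And>y. poly (minpoly E b) y = 0 \<Longrightarrow> y = b"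
  shows "b \<in> E"
proof -
  have "minpoly E b = [:-b, 1:]"
    using rsquarefree_single_root[OF ac minpoly_monic[OF E alg] rsf minpoly_root[OF E alg] only] .
  then have "- b \<in> E" using polys_over_coeff[OF minpoly_in_polys_over[OF E alg], of 0] by simp
  then show ?thesis using subfield_uminus[OF E] by fastforce
qed

lemma separating_scalar:
  fixes K :: "'a::field set"
  assumes K: "infinite K" and A: "finite A" and B: "finite B"
  obtains c where "c \<in> K"
    "\<And>a' b'. a' \<in> A \<Longrightarrow> b' \<in> B \<Longrightarrow> b' \<noteq> b \<Longrightarrow> a + c * b \<noteq> a' + c * b'"
proof -
  have "finite ((\<lambda>(a', b'). (a' - a) / (b - b')) ` (A \<times> B))" using A B by simp
  then obtain c where c: "c \<in> K" "c \<notin> (\<lambda>(a', b'). (a' - a) / (b - b')) ` (A \<times> B)"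
    using Diff_infinite_finite[OF _ K] by (metis Diff_iff finite.emptyI ex_in_conv)
  have "a + c * b \<noteq> a' + c * b'" if "a' \<in> A" "b' \<in> B" "b' \<noteq> b" for a' b'
  proof
    assume "a + c * b = a' + c * b'"
    then have "c = (a' - a) / (b - b')" using that(3) by (simp add: field_simps)
    then show False using c(2) that(1,2) by auto
  qed
  then show ?thesis using that c(1) by blast
qed

lemma primitive_element_pair:
  fixes K :: "'a::field set"
  assumes K: "is_subfield K" and alg: "\<And>z. algebraic_over K z"
    and sep: "\<And>z. rsquarefree (minpoly K z)" and ac: "alg_closed_type TYPE('a)"
    and inf: "infinite K"
  shows "\<exists>c\<in>K. a \<in> adjoin K (a + c * b) \<and> b \<in> adjoin K (a + c * b)"
proof -
  define f where "f = minpoly K a"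
  define g where "g = minpoly K b"
  have fin: "finite {y. poly f y = 0}" "finite {y. poly g y = 0}"
    unfolding f_def g_def using minpoly_nonzero[OF K alg] poly_roots_finite by auto
  obtain c where c: "c \<in> K" and separating: "\<And>a' b'. a' \<in> {y. poly f y = 0} \<Longrightarrow>
      b' \<in> {y. poly g y = 0} \<Longrightarrow> b' \<noteq> b \<Longrightarrow> a + c * b \<noteq> a' + c * b'"
    using separating_scalar[OF inf fin, where a = a and b = b] by blast
  define \<gamma> where "\<gamma> = a + c * b"
  define E where "E = adjoin K \<gamma>"
  have E: "is_subfield E" and KE: "K \<subseteq> E" and \<gamma>E: "\<gamma> \<in> E"
    unfolding E_def using is_subfield_adjoin[OF K alg] subset_adjoin[OF K] adjoin_gen[OF K] by auto
  have cE: "c \<in> E" using c KE by auto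
  have algE: "algebraic_over E b" using alg algebraic_over_mono KE by blast
  define m where "m = minpoly E b"
  define k where "k = pcompose f [:\<gamma>, -c:]"
  have fE: "f \<in> polys_over E" and gE: "g \<in> polys_over E"
    unfolding f_def g_def using minpoly_in_polys_over[OF K alg] polys_over_mono[OF KE] by auto
  have "k \<in> polys_over E" unfolding k_def
    by (intro polys_over_pcompose E fE polys_over_pCons polys_over_const subfield_uminus cE \<gamma>E)
  moreover have "poly k b = 0"
    unfolding k_def using minpoly_root[OF K alg]
      by (simp add: poly_pcompose \<gamma>_def f_def algebra_simps)
  ultimately have mk: "m dvd k" unfolding m_def by (rule minpoly_dvd[OF E algE])
  have mg: "m dvd g" unfolding m_def g_def
    using minpoly_dvd[OF E algE gE] minpoly_root[OF K alg] by (simp add: g_def)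
  \<comment> \<open>\<open>m\<close> divides \<open>g\<close> and \<open>f(\<gamma> - c X)\<close>, whose only common root is \<open>b\<close>\<close>
  have only: "y = b" if y: "poly m y = 0" for y
  proof (rule ccontr)
    assume "y \<noteq> b"
    have "poly g y = 0" using mg y by (auto elim!: dvdE)
    moreover have "poly k y = 0" using mk y by (auto elim!: dvdE)
    then have "poly f (\<gamma> - c * y) = 0" by (simp add: k_def poly_pcompose algebra_simps)
    ultimately have "a + c * b \<noteq> (\<gamma> - c * y) + c * y"
      using separating[of "\<gamma> - c * y" y] \<open>y \<noteq> b\<close> by simp
    then show False by (simp add: \<gamma>_def)
  qed
  have bE: "b \<in> E"
    using in_subfield_if_unique_root[OF ac E algE rsquarefree_dvd[OF sep mg[unfolded m_def g_def]]
        only[unfolded m_def]] .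
  have "a \<in> E" using subfield_diff[OF E \<gamma>E subfield_mult[OF E cE bE]] by (simp add: \<gamma>_def)
  then show ?thesis using c bE by (auto simp: E_def \<gamma>_def)
qed

lemma finite_subfield_cyclic:
  fixes M :: "'a::field set"
  assumes M: "is_subfield M" and fin: "finite M"
  obtains a where "a \<in> M" "M - {0} \<subseteq> range (\<lambda>i. a ^ i)"
proof -
  define R where
    "R = \<lparr>carrier = M, monoid.mult = (*), one = (1::'a), zero = 0, add = ((+) :: 'a \<Rightarrow> _)\<rparr>"
  have "x \<in> M \<Longrightarrow> \<exists>y\<in>M. x + y = 0" for x
    using subfield_uminus[OF M] by (metis add.right_inverse)
  moreover have "x \<in> M \<Longrightarrow> x \<noteq> 0 \<Longrightarrow> \<exists>y\<in>M. x * y = 1" for x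
    using subfield_inverse[OF M] by (metis right_inverse)
  ultimately have "field R"
    unfolding R_def using subfield_0[OF M] subfield_1[OF M] subfield_add[OF M] subfield_mult[OF M]
    by unfold_locales (auto simp: algebra_simps Units_def)
  moreover have "finite (carrier R)" using fin by (simp add: R_def)
  ultimately obtain a where a: "a \<in> carrier (mult_of R)"
    "carrier (mult_of R) = {a [^]\<^bsub>R\<^esub> i | i::nat. i \<in> UNIV}"
    using field.finite_field_mult_group_has_gen by blast
  have pow: "a [^]\<^bsub>R\<^esub> i = a ^ i" for i :: nat
    by (induction i) (simp_all add: R_def)
  have "carrier (mult_of R) = M - {0}" by (simp add: R_def)
  then show ?thesis using that[of a] a pow by auto
qed

lemma primitive_element_finite:
  assumes K: "is_subfield K" and fin: "finite K" and fe: "finite_ext K M"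
  shows "\<exists>\<alpha>\<in>M. M = adjoin K \<alpha>"
proof -
  have M: "is_subfield M" and KM: "K \<subseteq> M" using fe by (auto simp: finite_ext_def)
  obtain a where a: "a \<in> M" "M - {0} \<subseteq> range (\<lambda>i. a ^ i)"
    using finite_subfield_cyclic[OF M finite_ext_finite[OF fe fin]] .
  have "a ^ i \<in> adjoin K a" for i
    using poly_in_adjoin[OF K polys_over_monom[OF K subfield_1[OF K]] adjoin_gen[OF K], of i a]
    by (simp add: poly_monom)
  then have "M \<subseteq> adjoin K a" using a(2) subset_adjoin[OF K] subfield_0[OF K] by blast
  then show ?thesis using adjoin_least[OF K M KM a(1)] a(1) by blast
qed

lemma primitive_element_infinite:
  fixes K :: "'a::field set"
  assumes K: "is_subfield K" and alg: "\<And>z. algebraic_over K z"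
    and sep: "\<And>z. rsquarefree (minpoly K z)" and ac: "alg_closed_type TYPE('a)"
    and inf: "infinite K" and fe: "finite_ext K M"
  shows "\<exists>\<alpha>\<in>M. M = adjoin K \<alpha>"
proof -
  have M: "is_subfield M" and KM: "K \<subseteq> M" using fe by (auto simp: finite_ext_def)
  obtain S where S: "finite S" "S \<subseteq> M" "span_over K S = M" using fe by (auto simp: finite_ext_def)
  have "\<exists>\<gamma>\<in>M. T \<subseteq> adjoin K \<gamma>" if "finite T" "T \<subseteq> M" for T
    using that
  proof (induction T rule: finite_induct)
    case empty
    then show ?case using subfield_0[OF M] by blast
  next
    case (insert s T)
    then obtain \<gamma> where \<gamma>: "\<gamma> \<in> M" "T \<subseteq> adjoin K \<gamma>" by auto
    obtain c where c: "c \<in> K" "\<gamma> \<in> adjoin K (\<gamma> + c * s)" "s \<in> adjoin K (\<gamma> + c * s)"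
      using primitive_element_pair[OF K alg sep ac inf] by blast
    have "adjoin K \<gamma> \<subseteq> adjoin K (\<gamma> + c * s)"
      using adjoin_least[OF K is_subfield_adjoin[OF K alg] subset_adjoin[OF K] c(2)] .
    moreover have "\<gamma> + c * s \<in> M"
      using \<gamma> c insert KM by (intro subfield_add[OF M] subfield_mult[OF M]) auto
    ultimately show ?case using \<gamma> c by blast
  qed
  then obtain \<gamma> where \<gamma>: "\<gamma> \<in> M" "S \<subseteq> adjoin K \<gamma>" using S by blast
  have "M \<subseteq> adjoin K \<gamma>"
    using span_over_subset[OF is_subfield_adjoin[OF K alg] subset_adjoin[OF K] \<gamma>(2)] S(3) by simp
  then show ?thesis using adjoin_least[OF K M KM \<gamma>(1)] \<gamma>(1) by blast
qed

lemma primitive_element: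
  fixes K :: "'a::field set"
  assumes pf: "perfect_field K" and alg: "\<And>z. algebraic_over K z"
    and ac: "alg_closed_type TYPE('a)" and fe: "finite_ext K M"
  shows "\<exists>\<alpha>\<in>M. M = adjoin K \<alpha>"
proof -
  have K: "is_subfield K" using pf by (simp add: perfect_field_def)
  show ?thesis
    using primitive_element_finite[OF K _ fe]
      primitive_element_infinite[OF K alg minpoly_rsquarefree[OF pf alg] ac _ fe] by blast
qed

definition hom_on :: "'a::field set \<Rightarrow> ('a \<Rightarrow> 'a) \<Rightarrow> bool" where
  "hom_on A \<sigma> \<longleftrightarrow> \<sigma> 1 = 1 \<and> (\<forall>x\<in>A. \<forall>y\<in>A. \<sigma> (x + y) = \<sigma> x + \<sigma> y \<and> \<sigma> (x * y) = \<sigma> x * \<sigma> y)"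

lemma map_poly_fixed:
  assumes "\<And>c. c \<in> F \<Longrightarrow> \<sigma> c = c" "\<sigma> 0 = 0" "p \<in> polys_over F"
  shows "map_poly \<sigma> p = p"
  using assms by (intro poly_eqI) (simp add: coeff_map_poly polys_over_coeff)

context
  fixes A :: "'a::field set" and \<sigma> :: "'a \<Rightarrow> 'a"
  assumes A: "is_subfield A" and hom: "hom_on A \<sigma>"
begin

lemma hom_on_1: "\<sigma> 1 = 1"
  and hom_on_add: "x \<in> A \<Longrightarrow> y \<in> A \<Longrightarrow> \<sigma> (x + y) = \<sigma> x + \<sigma> y"
  and hom_on_mult: "x \<in> A \<Longrightarrow> y \<in> A \<Longrightarrow> \<sigma> (x * y) = \<sigma> x * \<sigma> y"
  using hom by (simp_all add: hom_on_def)

lemma hom_on_0: "\<sigma> 0 = 0"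
proof -
  have "\<sigma> 0 + \<sigma> 0 = \<sigma> 0 + 0" using hom_on_add[OF subfield_0[OF A] subfield_0[OF A]] by simp
  then show ?thesis by (rule add_left_imp_eq)
qed

lemma hom_on_uminus: "x \<in> A \<Longrightarrow> \<sigma> (- x) = - \<sigma> x"
  using hom_on_add[of x "- x"] subfield_uminus[OF A] hom_on_0
  by (simp add: add.inverse_unique)

lemma hom_on_sum: "(\<And>i. i \<in> I \<Longrightarrow> f i \<in> A) \<Longrightarrow> \<sigma> (sum f I) = (\<Sum>i\<in>I. \<sigma> (f i))"
  by (induction I rule: infinite_finite_induct) (auto simp: hom_on_0 hom_on_add subfield_sum[OF A])

lemma hom_on_eq_0_iff:
  assumes x: "x \<in> A"
  shows "\<sigma> x = 0 \<longleftrightarrow> x = 0"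
proof
  assume "\<sigma> x = 0"
  moreover have "x \<noteq> 0 \<Longrightarrow> \<sigma> x * \<sigma> (inverse x) = 1"
    using hom_on_mult[OF x subfield_inverse[OF A x]] hom_on_1 by simp
  ultimately show "x = 0" by auto
qed (simp add: hom_on_0)

lemma inj_on_hom_on: "inj_on \<sigma> A"
proof (rule inj_onI)
  fix x y assume "x \<in> A" "y \<in> A" "\<sigma> x = \<sigma> y"
  then have "\<sigma> (x - y) = 0"
    using hom_on_add[of x "- y"] hom_on_uminus[of y] subfield_uminus[OF A, of y] by simp
  then show "x = y" using hom_on_eq_0_iff subfield_diff[OF A \<open>x \<in> A\<close> \<open>y \<in> A\<close>] by simp
qed

lemma hom_on_poly: "p \<in> polys_over A \<Longrightarrow> z \<in> A \<Longrightarrow> \<sigma> (poly p z) = poly (map_poly \<sigma> p) (\<sigma> z)"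
proof (induction p)
  case (pCons c p)
  then have "c \<in> A" "p \<in> polys_over A" "poly p z \<in> A"
    using poly_in_subfield[OF A] by (auto simp: pCons_in_polys_over_iff)
  then show ?case using pCons
    by (simp add: map_poly_pCons hom_on_0 hom_on_add hom_on_mult subfield_mult[OF A])
qed (simp add: hom_on_0)

lemma hom_on_poly_fixed:
  assumes "\<And>c. c \<in> F \<Longrightarrow> \<sigma> c = c" "F \<subseteq> A" "p \<in> polys_over F" "z \<in> A"
  shows "\<sigma> (poly p z) = poly p (\<sigma> z)"
  using assms polys_over_mono[of F A] map_poly_fixed[OF assms(1) hom_on_0 assms(3)]
  by (auto simp: hom_on_poly)

lemma map_poly_hom_on_prod:
  "(\<And>i. i \<in> I \<Longrightarrow> f i \<in> polys_over A) \<Longrightarrow> map_poly \<sigma> (prod f I) = (\<Prod>i\<in>I. map_poly \<sigma> (f i))"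
proof (induction I rule: infinite_finite_induct)
  case (insert i I)
  have "map_poly \<sigma> (p * q) = map_poly \<sigma> p * map_poly \<sigma> q"
    if "p \<in> polys_over A" "q \<in> polys_over A" for p q
    using that by (intro poly_eqI)
      (simp add: coeff_map_poly hom_on_0 coeff_mult hom_on_sum hom_on_mult polys_over_coeff
        subfield_mult[OF A])
  with insert show ?case by (simp add: polys_over_prod[OF A])
qed (simp_all add: hom_on_1)

lemma map_poly_hom_on_linear: "c \<in> A \<Longrightarrow> map_poly \<sigma> [:- c, 1:] = [:- \<sigma> c, 1:]"
  by (simp add: map_poly_pCons hom_on_0 hom_on_1 hom_on_uminus)

end

section \<open>Conjugation maps on simple extensions\<close>

text \<open>The \<open>F\<close>-homomorphism \<open>F[a] \<rightarrow> F[\<rho>]\<close> with \<open>a \<mapsto> \<rho>\<close>; it is well defined when \<open>\<rho>\<close>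
  is a root of the minimal polynomial of \<open>a\<close>.\<close>
definition conj_hom :: "'a::field set \<Rightarrow> 'a \<Rightarrow> 'a \<Rightarrow> 'a \<Rightarrow> 'a" where
  "conj_hom F a \<rho> x = poly (SOME u. u \<in> polys_over F \<and> poly u a = x) \<rho>"

context
  fixes F :: "'a::field set" and a \<rho> :: 'a
  assumes F: "is_subfield F" and alg: "algebraic_over F a" and conj: "poly (minpoly F a) \<rho> = 0"
begin

lemma conj_hom_poly:
  assumes u: "u \<in> polys_over F"
  shows "conj_hom F a \<rho> (poly u a) = poly u \<rho>"
proof -
  define v where "v = (SOME v. v \<in> polys_over F \<and> poly v a = poly u a)"
  have "v \<in> polys_over F \<and> poly v a = poly u a"
    using someI[of "\<lambda>v. v \<in> polys_over F \<and> poly v a = poly u a" u] u unfolding v_def by blast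
  then have "minpoly F a dvd v - u"
    using minpoly_dvd[OF F alg] polys_over_diff[OF F _ u] by simp
  then have "poly (v - u) \<rho> = 0" using conj by (metis dvd_def mult_zero_left poly_mult)
  then show ?thesis by (simp add: conj_hom_def v_def[symmetric])
qed

lemma hom_on_conj_hom: "hom_on (adjoin F a) (conj_hom F a \<rho>)"
  unfolding hom_on_def
proof (intro conjI ballI)
  show "conj_hom F a \<rho> 1 = 1" using conj_hom_poly[OF polys_over_1[OF F]] by simp
  fix x y assume "x \<in> adjoin F a" "y \<in> adjoin F a"
  then obtain u v where u: "u \<in> polys_over F" "x = poly u a"
    and v: "v \<in> polys_over F" "y = poly v a"
    by (auto elim!: adjoinE)
  show "conj_hom F a \<rho> (x + y) = conj_hom F a \<rho> x + conj_hom F a \<rho> y"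
    using conj_hom_poly[OF polys_over_add[OF F u(1) v(1)]] conj_hom_poly u v by simp
  show "conj_hom F a \<rho> (x * y) = conj_hom F a \<rho> x * conj_hom F a \<rho> y"
    using conj_hom_poly[OF polys_over_mult[OF F u(1) v(1)]] conj_hom_poly u v by simp
qed

lemma conj_hom_fixed: "c \<in> F \<Longrightarrow> conj_hom F a \<rho> c = c"
  using conj_hom_poly[OF polys_over_const[OF F]] by simp

lemma conj_hom_gen: "conj_hom F a \<rho> a = \<rho>"
  using conj_hom_poly[OF polys_over_pCons[OF F subfield_0[OF F] polys_over_1[OF F]]]
  by (simp add: one_pCons)

end

locale simple_ext =
  fixes F :: "'a::field set" and a :: 'a
  assumes subfield: "is_subfield F" and algebraic: "\<And>z. algebraic_over F z"
begin

abbreviation conjugates :: "'a set" where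
  "conjugates \<equiv> roots_in (adjoin F a) (minpoly F a)"

lemma subfield_adjoin: "is_subfield (adjoin F a)"
  using is_subfield_adjoin[OF subfield algebraic] .

lemma finite_conjugates: "finite conjugates"
  using finite_roots_in[OF minpoly_nonzero[OF subfield algebraic]] .

lemma gen_in_conjugates: "a \<in> conjugates"
  using adjoin_gen[OF subfield] minpoly_root[OF subfield algebraic] by (simp add: roots_in_def)

context
  fixes \<rho> assumes \<rho>: "\<rho> \<in> conjugates"
begin

lemma hom_on_conj: "hom_on (adjoin F a) (conj_hom F a \<rho>)"
  using hom_on_conj_hom[OF subfield algebraic] \<rho> by (simp add: roots_in_def)

lemma conj_hom_poly_commute:
  assumes "p \<in> polys_over F" "z \<in> adjoin F a"
  shows "conj_hom F a \<rho> (poly p z) = poly p (conj_hom F a \<rho> z)"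
  using hom_on_poly_fixed[OF subfield_adjoin hom_on_conj _ subset_adjoin[OF subfield] assms]
    conj_hom_fixed[OF subfield algebraic] \<rho> by (simp add: roots_in_def)

lemma conj_hom_in_adjoin:
  assumes "y \<in> adjoin F a"
  shows "conj_hom F a \<rho> y \<in> adjoin F a"
proof -
  obtain u where "u \<in> polys_over F" "y = poly u a" using assms by (rule adjoinE)
  then show ?thesis
    using conj_hom_poly_commute conj_hom_gen[OF subfield algebraic] adjoin_gen[OF subfield]
      poly_in_adjoin[OF subfield] \<rho> by (simp add: roots_in_def)
qed

lemma conj_hom_roots_in:
  assumes "p \<in> polys_over F" "z \<in> roots_in (adjoin F a) p"
  shows "conj_hom F a \<rho> z \<in> roots_in (adjoin F a) p"
  using assms conj_hom_poly_commute[OF assms(1)] conj_hom_in_adjoin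
    hom_on_0[OF subfield_adjoin hom_on_conj]
  by (metis (mono_tags, lifting) mem_Collect_eq roots_in_def)

lemma inj_on_conj_hom: "inj_on (conj_hom F a \<rho>) (adjoin F a)"
  using inj_on_hom_on[OF subfield_adjoin hom_on_conj] .

lemma conj_hom_permutes_conjugates: "conj_hom F a \<rho> ` conjugates = conjugates"
  using endo_inj_surj[OF finite_conjugates] inj_on_conj_hom
    conj_hom_roots_in[OF minpoly_in_polys_over[OF subfield algebraic]]
  by (metis (no_types, lifting) image_subsetI inj_on_subset mem_Collect_eq roots_in_def subsetI)

lemma conj_hom_surj: "conj_hom F a \<rho> ` adjoin F a = adjoin F a"
proof
  show "conj_hom F a \<rho> ` adjoin F a \<subseteq> adjoin F a" using conj_hom_in_adjoin by blast
  obtain \<rho>' where \<rho>': "\<rho>' \<in> conjugates" "conj_hom F a \<rho> \<rho>' = a"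
    using gen_in_conjugates conj_hom_permutes_conjugates by (metis imageE)
  show "adjoin F a \<subseteq> conj_hom F a \<rho> ` adjoin F a"
  proof
    fix x assume "x \<in> adjoin F a"
    then obtain u where u: "u \<in> polys_over F" "x = poly u a" by (rule adjoinE)
    have "\<rho>' \<in> adjoin F a" using \<rho>' by (simp add: roots_in_def)
    then show "x \<in> conj_hom F a \<rho> ` adjoin F a"
      using conj_hom_poly_commute[OF u(1)] poly_in_adjoin[OF subfield u(1)] \<rho>' u(2)
        by (metis image_eqI)
  qed
qed

end

lemma conj_hom_self: "y \<in> adjoin F a \<Longrightarrow> conj_hom F a a y = y"
  by (auto elim!: adjoinE
      simp: conj_hom_poly[OF subfield algebraic minpoly_root[OF subfield algebraic]])

lemma conj_hom_comp:
  assumes i: "i \<in> conjugates" and j: "j \<in> conjugates" and y: "y \<in> adjoin F a"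
  shows "conj_hom F a j (conj_hom F a i y) = conj_hom F a (conj_hom F a j i) y"
proof -
  obtain u where u: "u \<in> polys_over F" "y = poly u a" using y by (rule adjoinE)
  have ji: "conj_hom F a j i \<in> conjugates" using conj_hom_permutes_conjugates[OF j] i by blast
  have conj: "poly (minpoly F a) \<rho> = 0" if "\<rho> \<in> conjugates" for \<rho>
    using that by (simp add: roots_in_def)
  have "conj_hom F a j (conj_hom F a i y) = conj_hom F a j (poly u i)"
    using conj_hom_poly[OF subfield algebraic conj[OF i] u(1)] u(2) by simp
  also have "\<dots> = poly u (conj_hom F a j i)"
    using conj_hom_poly_commute[OF j u(1)] i by (simp add: roots_in_def)
  also have "\<dots> = conj_hom F a (conj_hom F a j i) y"
    using conj_hom_poly[OF subfield algebraic conj[OF ji] u(1)] u(2) by simp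
  finally show ?thesis .
qed

end

section \<open>A normality criterion\<close>

context simple_ext
begin

lemma fixed_by_conj_homs_in_base:
  assumes card: "card conjugates = degree (minpoly F a)"
    and z: "z \<in> adjoin F a" and fixed: "\<And>j. j \<in> conjugates \<Longrightarrow> conj_hom F a j z = z"
  shows "z \<in> F"
proof -
  let ?h = "minpoly F a"
  obtain u where u: "u \<in> polys_over F" "z = poly u a" using z by (rule adjoinE)
  obtain s r where sr: "s \<in> polys_over F" "r \<in> polys_over F" "u = ?h * s + r"
    "r = 0 \<or> degree r < degree ?h"
    using polys_over_div_mod[OF subfield minpoly_in_polys_over minpoly_nonzero u(1)]
      subfield algebraic by blast
  have "poly r a = z" using u(2) sr(3) minpoly_root[OF subfield algebraic] by simp
  then have "poly r j = z" if "j \<in> conjugates" for j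
    using that conj_hom_poly[OF subfield algebraic _ sr(2)] fixed by (fastforce simp: roots_in_def)
  then have roots: "conjugates \<subseteq> {y. poly (r - [:z:]) y = 0}" by (auto simp: roots_in_def)
  have deg: "degree (r - [:z:]) < degree ?h"
    using sr(4) minpoly_degree_pos[OF subfield algebraic] degree_diff_le_max[of r "[:z:]"] by auto
  have "r - [:z:] = 0"
  proof (rule ccontr)
    assume nz: "r - [:z:] \<noteq> 0"
    have "card conjugates \<le> card {y. poly (r - [:z:]) y = 0}"
      using roots by (intro card_mono poly_roots_finite nz)
    also have "\<dots> \<le> degree (r - [:z:])" by (rule card_poly_roots_bound[OF nz])
    finally show False using deg card by simp
  qed
  then have "z = coeff r 0" by (simp add: poly_eq_iff)
  then show ?thesis using polys_over_coeff[OF sr(2)] by simp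
qed

definition orbit_poly :: "'a \<Rightarrow> 'a poly" where
  "orbit_poly x = (\<Prod>i\<in>conjugates. [:- conj_hom F a i x, 1:])"

lemma orbit_poly_in_adjoin:
  assumes "x \<in> adjoin F a"
  shows "orbit_poly x \<in> polys_over (adjoin F a)"
  unfolding orbit_poly_def using assms subfield_adjoin
  by (auto intro!: polys_over_prod polys_over_pCons subfield_uminus subfield_1 polys_over_0
      conj_hom_in_adjoin)

lemma map_poly_conj_hom_orbit_poly:
  assumes x: "x \<in> adjoin F a" and j: "j \<in> conjugates"
  shows "map_poly (conj_hom F a j) (orbit_poly x) = orbit_poly x"
proof -
  have "map_poly (conj_hom F a j) (orbit_poly x) =
      (\<Prod>i\<in>conjugates. map_poly (conj_hom F a j) [:- conj_hom F a i x, 1:])"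
    unfolding orbit_poly_def using x subfield_adjoin
    by (intro map_poly_hom_on_prod[OF subfield_adjoin hom_on_conj[OF j]])
      (auto intro!: polys_over_pCons subfield_uminus subfield_1 polys_over_0 conj_hom_in_adjoin)
  also have "\<dots> = (\<Prod>i\<in>conjugates. [:- conj_hom F a (conj_hom F a j i) x, 1:])"
    using map_poly_hom_on_linear[OF subfield_adjoin hom_on_conj[OF j]] conj_hom_in_adjoin
      conj_hom_comp[OF _ j x] x by simp
  also have "\<dots> = (\<Prod>i\<in>conj_hom F a j ` conjugates. [:- conj_hom F a i x, 1:])"
  proof -
    have "inj_on (conj_hom F a j) conjugates"
      using inj_on_subset[OF inj_on_conj_hom[OF j]] by (auto simp: roots_in_def)
    then show ?thesis by (subst prod.reindex) (simp_all add: comp_def)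
  qed
  also have "\<dots> = orbit_poly x"
    using conj_hom_permutes_conjugates[OF j] by (simp add: orbit_poly_def)
  finally show ?thesis .
qed

lemma normal_ext_if_card_conjugates:
  assumes card: "card conjugates = degree (minpoly F a)"
  shows "normal_ext F (adjoin F a)"
  unfolding normal_ext_def
proof (intro ballI allI impI)
  fix x y assume x: "x \<in> adjoin F a" and y: "poly (minpoly F x) y = 0"
  have "orbit_poly x \<in> polys_over F"
    unfolding polys_over_def
  proof (intro CollectI allI)
    fix k
    let ?c = "coeff (orbit_poly x) k"
    have "conj_hom F a j ?c = ?c" if j: "j \<in> conjugates" for j
      using arg_cong[OF map_poly_conj_hom_orbit_poly[OF x j], of "\<lambda>p. coeff p k"]
        hom_on_0[OF subfield_adjoin hom_on_conj[OF j]] by (simp add: coeff_map_poly)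
    then show "?c \<in> F"
      using fixed_by_conj_homs_in_base[OF card polys_over_coeff[OF orbit_poly_in_adjoin[OF x]]]
      by blast
  qed
  moreover have "poly (orbit_poly x) x = 0"
    unfolding orbit_poly_def poly_prod using finite_conjugates gen_in_conjugates conj_hom_self[OF x]
    by (intro prod_zero) (auto intro!: bexI[of _ a])
  ultimately have "minpoly F x dvd orbit_poly x" by (rule minpoly_dvd[OF subfield algebraic])
  then have "poly (orbit_poly x) y = 0" using y by (auto elim!: dvdE)
  then obtain i where "i \<in> conjugates" "y = conj_hom F a i x"
    unfolding orbit_poly_def poly_prod using finite_conjugates by (auto simp: prod_zero_iff)
  then show "y \<in> adjoin F a" using conj_hom_in_adjoin x by simp
qed

end

section \<open>Counting conjugates\<close>

lemma card_le_mult_fibres: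
  assumes B: "finite B" "f ` A \<subseteq> B" and fibres: "\<And>x. x \<in> A \<Longrightarrow> card {y \<in> A. f y = f x} \<le> k"
  shows "card A \<le> card B * k"
proof -
  have fibre: "card {x \<in> A. f x = b} \<le> k" for b
  proof (cases "\<exists>x\<in>A. f x = b")
    case True
    then show ?thesis using fibres by blast
  next
    case False
    then have "{x \<in> A. f x = b} = {}" by blast
    then show ?thesis by (metis card.empty zero_le)
  qed
  have "card A = card (\<Union>b\<in>B. {x \<in> A. f x = b})"
    by (rule arg_cong[where f = card]) (use B(2) in auto)
  also have "\<dots> \<le> (\<Sum>b\<in>B. card {x \<in> A. f x = b})" by (rule card_UN_le[OF B(1)])
  also have "\<dots> \<le> card B * k" using sum_bounded_above[of B _ k] fibre by simp
  finally show ?thesis .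
qed

context simple_ext
begin

context
  fixes L :: "'a set" and b :: 'a
  assumes L: "is_subfield L" "F \<subseteq> L" "L \<subseteq> adjoin F a" and Lb: "L = adjoin F b"
begin

text \<open>Conjugation maps that agree on \<open>b\<close> agree on \<open>L = F[b]\<close>.\<close>
lemma conj_hom_fibre:
  assumes \<rho>: "\<rho> \<in> conjugates" and \<rho>0: "\<rho>0 \<in> conjugates"
    and eq: "conj_hom F a \<rho> b = conj_hom F a \<rho>0 b"
  shows "\<rho> \<in> conj_hom F a \<rho>0 ` roots_in (adjoin F a) (minpoly L a)"
proof -
  let ?h = "minpoly L a" and ?\<sigma> = "conj_hom F a \<rho>" and ?\<tau> = "conj_hom F a \<rho>0"
  have algL: "algebraic_over L a" using algebraic algebraic_over_mono L(2) by blast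
  have bA: "b \<in> adjoin F a" using Lb adjoin_gen[OF subfield] L(3) by blast
  have agree: "?\<sigma> l = ?\<tau> l" if "l \<in> L" for l
  proof -
    from that obtain w where "w \<in> polys_over F" "l = poly w b" unfolding Lb by (rule adjoinE)
    then show ?thesis using conj_hom_poly_commute[OF \<rho>] conj_hom_poly_commute[OF \<rho>0] bA eq by simp
  qed
  have hL: "?h \<in> polys_over L" using minpoly_in_polys_over[OF L(1) algL] .
  then have hA: "?h \<in> polys_over (adjoin F a)" using polys_over_mono[OF L(3)] by blast
  have map_eq: "map_poly ?\<tau> ?h = map_poly ?\<sigma> ?h"
    using agree polys_over_coeff[OF hL] hom_on_0[OF subfield_adjoin hom_on_conj[OF \<rho>]]
      hom_on_0[OF subfield_adjoin hom_on_conj[OF \<rho>0]]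
    by (intro poly_eqI) (simp add: coeff_map_poly)
  have "\<rho> \<in> adjoin F a" using \<rho> by (simp add: roots_in_def)
  then obtain \<gamma> where \<gamma>: "\<gamma> \<in> adjoin F a" "?\<tau> \<gamma> = \<rho>"
    using conj_hom_surj[OF \<rho>0] by (metis imageE)
  have "?\<tau> (poly ?h \<gamma>) = poly (map_poly ?\<tau> ?h) (?\<tau> \<gamma>)"
    using hom_on_poly[OF subfield_adjoin hom_on_conj[OF \<rho>0] hA \<gamma>(1)] .
  also have "\<dots> = poly (map_poly ?\<sigma> ?h) (?\<sigma> a)"
  proof -
    have "?\<sigma> a = \<rho>" using conj_hom_gen[OF subfield algebraic[of a]] \<rho> by (simp add: roots_in_def)
    then show ?thesis using map_eq \<gamma>(2) by simp
  qed
  also have "\<dots> = ?\<sigma> (poly ?h a)"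
    using hom_on_poly[OF subfield_adjoin hom_on_conj[OF \<rho>] hA adjoin_gen[OF subfield]] by simp
  also have "\<dots> = 0"
    using minpoly_root[OF L(1) algL] hom_on_0[OF subfield_adjoin hom_on_conj[OF \<rho>]] by simp
  finally have "poly ?h \<gamma> = 0"
    using hom_on_eq_0_iff[OF subfield_adjoin hom_on_conj[OF \<rho>0]]
      poly_in_subfield[OF subfield_adjoin hA \<gamma>(1)] by simp
  then have "\<gamma> \<in> roots_in (adjoin F a) ?h" using \<gamma>(1) by (simp add: roots_in_def)
  then show ?thesis using \<gamma>(2) by blast
qed

lemma card_conjugates_le:
  assumes closed: "roots_in (adjoin F a) (minpoly F b) \<subseteq> L"
  shows "card conjugates \<le>
    card (roots_in L (minpoly F b)) * card (roots_in (adjoin F a) (minpoly L a))"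
proof (rule card_le_mult_fibres)
  have algL: "algebraic_over L a" using algebraic algebraic_over_mono L(2) by blast
  show "finite (roots_in L (minpoly F b))"
    using finite_roots_in[OF minpoly_nonzero[OF subfield algebraic]] .
  have "b \<in> roots_in (adjoin F a) (minpoly F b)"
    using Lb adjoin_gen[OF subfield] L(3) minpoly_root[OF subfield algebraic]
    by (auto simp: roots_in_def)
  then show "(\<lambda>\<rho>. conj_hom F a \<rho> b) ` conjugates \<subseteq> roots_in L (minpoly F b)"
    using conj_hom_roots_in[OF _ minpoly_in_polys_over[OF subfield algebraic]] closed
    by (auto simp: roots_in_def)
  fix \<rho>0 assume \<rho>0: "\<rho>0 \<in> conjugates"
  have fin: "finite (roots_in (adjoin F a) (minpoly L a))"
    using finite_roots_in[OF minpoly_nonzero[OF L(1) algL]] .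
  have "{\<rho> \<in> conjugates. conj_hom F a \<rho> b = conj_hom F a \<rho>0 b} \<subseteq>
      conj_hom F a \<rho>0 ` roots_in (adjoin F a) (minpoly L a)"
    using conj_hom_fibre[OF _ \<rho>0] by auto
  then have "card {\<rho> \<in> conjugates. conj_hom F a \<rho> b = conj_hom F a \<rho>0 b} \<le>
      card (conj_hom F a \<rho>0 ` roots_in (adjoin F a) (minpoly L a))"
    using fin by (intro card_mono finite_imageI)
  also have "\<dots> \<le> card (roots_in (adjoin F a) (minpoly L a))" by (rule card_image_le[OF fin])
  finally show "card {\<rho> \<in> conjugates. conj_hom F a \<rho> b = conj_hom F a \<rho>0 b} \<le>
      card (roots_in (adjoin F a) (minpoly L a))" .
qed

end

end

section \<open>Cluster sizes\<close>

lemma cluster_size_primitive: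
  fixes K M :: "'a::field set"
  assumes pf: "perfect_field K" and alg: "\<And>z. algebraic_over K z"
    and ac: "alg_closed_type TYPE('a)" and fe: "finite_ext K M"
  obtains \<alpha> where "\<alpha> \<in> M" "M = adjoin K \<alpha>" "cluster_size K M = card (roots_in M (minpoly K \<alpha>))"
proof -
  have K: "is_subfield K" using pf by (simp add: perfect_field_def)
  let ?\<alpha> = "SOME \<alpha>. \<alpha> \<in> M \<and> M = gen_field K \<alpha>"
  have "\<exists>\<alpha>. \<alpha> \<in> M \<and> M = gen_field K \<alpha>"
    using primitive_element[OF pf alg ac fe] gen_field_eq_adjoin[OF K alg] by metis
  then have "?\<alpha> \<in> M \<and> M = gen_field K ?\<alpha>" by (rule someI_ex)
  then show ?thesis
    using that[of ?\<alpha>] gen_field_eq_adjoin[OF K alg]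
    by (simp add: cluster_size_def roots_in_def Let_def)
qed

lemma conjugate_in_galois_closure:
  "\<beta> \<in> L \<Longrightarrow> poly (minpoly K \<beta>) y = 0 \<Longrightarrow> y \<in> galois_closure K L"
  unfolding galois_closure_def normal_ext_def by blast

lemma cluster_size_pos:
  fixes K L :: "'a::field set"
  assumes pf: "perfect_field K" and alg: "\<And>z. algebraic_over K z"
    and ac: "alg_closed_type TYPE('a)" and fe: "finite_ext K L"
  shows "cluster_size K L > 0"
proof -
  have K: "is_subfield K" using pf by (simp add: perfect_field_def)
  obtain \<beta> where "\<beta> \<in> L" "cluster_size K L = card (roots_in L (minpoly K \<beta>))"
    using cluster_size_primitive[OF pf alg ac fe] by blast
  then show ?thesis
    using finite_roots_in[OF minpoly_nonzero[OF K alg]] minpoly_root[OF K alg]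
    by (auto simp: roots_in_def card_gt_0_iff)
qed

lemma cluster_size_le_mult:
  fixes K L M :: "'a::field set"
  assumes pf: "perfect_field K" and alg: "\<And>z. algebraic_over K z"
    and ac: "alg_closed_type TYPE('a)" and fe: "finite_ext K L" and LM: "L \<subseteq> M"
    and closed: "M \<inter> galois_closure K L \<subseteq> L"
    and \<alpha>: "M = adjoin K \<alpha>" "cluster_size K M = card (roots_in M (minpoly K \<alpha>))"
  shows "cluster_size K M \<le> cluster_size K L * card (roots_in M (minpoly L \<alpha>))"
proof -
  have K: "is_subfield K" and L: "is_subfield L" "K \<subseteq> L"
    using pf fe by (auto simp: perfect_field_def finite_ext_def)
  obtain \<beta> where \<beta>: "\<beta> \<in> L" "L = adjoin K \<beta>" "cluster_size K L = card (roots_in L (minpoly K \<beta>))"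
    using cluster_size_primitive[OF pf alg ac fe] .
  interpret simple_ext K \<alpha> using K alg by unfold_locales
  have "roots_in M (minpoly K \<beta>) \<subseteq> L"
    using closed conjugate_in_galois_closure[OF \<beta>(1)] by (auto simp: roots_in_def)
  then show ?thesis using card_conjugates_le[OF L _ \<beta>(2)] \<alpha> \<beta>(3) LM by simp
qed

theorem theorem6p18:
  fixes K L M :: "'a::field set"
  assumes "alg_closed_type TYPE('a)"
    and "\<forall>x::'a. algebraic_over K x"
    and "perfect_field K"
    and "finite_ext K L"
    and "finite_ext K M"
    and "L \<subseteq> M"
    and "M \<inter> galois_closure K L = L"
    and "real (ext_degree L M) = real (cluster_size K M) / real (cluster_size K L)"
  shows "galois_ext L M"
proof -
  have K: "is_subfield K" and L: "is_subfield L" "K \<subseteq> L"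
    using assms(3,4) by (auto simp: perfect_field_def finite_ext_def)
  have alg: "\<And>z. algebraic_over K z" and algL: "\<And>z. algebraic_over L z"
    using assms(2) algebraic_over_mono[OF _ L(2)] by blast+
  have feLM: "finite_ext L M" using finite_ext_tower[OF assms(5) L assms(6)] .
  obtain \<alpha> where \<alpha>: "\<alpha> \<in> M" "M = adjoin K \<alpha>"
      "cluster_size K M = card (roots_in M (minpoly K \<alpha>))"
    using cluster_size_primitive[OF assms(3) alg assms(1,5)] .
  have M_eq: "M = adjoin L \<alpha>"
    using adjoin_intermediate_eq[OF K L _ is_subfield_adjoin[OF K alg]] assms(6) \<alpha>(2) by simp
  interpret L\<alpha>: simple_ext L \<alpha> using L(1) algL by unfold_locales
  let ?H = "roots_in M (minpoly L \<alpha>)"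
  have pos: "cluster_size K L > 0" using cluster_size_pos[OF assms(3) alg assms(1,4)] .
  then have "cluster_size K L * ext_degree L M = cluster_size K M"
    using assms(8) by (simp add: field_simps flip: of_nat_mult)
  also have "\<dots> \<le> cluster_size K L * card ?H"
    using cluster_size_le_mult[OF assms(3) alg assms(1,4,6) _ \<alpha>(2,3)] assms(7) by simp
  finally have "ext_degree L M \<le> card ?H" using pos by simp
  moreover have "card ?H \<le> degree (minpoly L \<alpha>)"
    using card_roots_in_le[OF minpoly_nonzero[OF L(1) algL]] .
  moreover have "degree (minpoly L \<alpha>) \<le> ext_degree L M"
    using degree_minpoly_le_ext_degree[OF feLM algL \<alpha>(1)] .
  ultimately have "card L\<alpha>.conjugates = degree (minpoly L \<alpha>)" using M_eq by simp
  then show ?thesis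
    using L\<alpha>.normal_ext_if_card_conjugates separable_ext_over_perfect[OF assms(3) alg L] M_eq
    by (simp add: galois_ext_def)
qed

end
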